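(* A code $C\subseteq\mathbb{F}_q^n$ is degenerated if and only if $C^\perp$ is degenerated.
   Context: Codes are $\mathbb{F}_q$-linear subspaces of $\mathbb{F}_q^n$; $C^\perp$ is the dual with respect to $\langle\mathbf{u},\mathbf{v}\rangle=\sum_iu_iv_i$. The stabiliser of a code $H$ is $\mathrm{Stab}(H)=\{\mathbf{x}\in\mathbb{F}_q^n:\mathbf{x}*H\subseteq H\}$, where $*$ is the componentwise product. A code $H$ is degenerated if $\dim\mathrm{Stab}(H)>1$; equivalently (a known result), $H$ is a direct sum of nonzero subcodes with disjoint supports or every generator matrix of $H$ has a zero column. *)

theory Defs
  imports "HOL-Analysis.Analysis"
begin

text \<open>Codes over a finite field 'a = F_q of length n = CARD('n): linear subspaces of 'a^'n.\<close>

definition is_code :: "('a::{field,finite} ^ 'n) set \<Rightarrow> bool" where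
  "is_code C \<longleftrightarrow> vec.subspace C"

definition std_inner :: "'a::field ^ 'n \<Rightarrow> 'a ^ 'n \<Rightarrow> 'a" where
  "std_inner u v = (\<Sum>i\<in>UNIV. u $ i * v $ i)"

definition dual_code :: "('a::field ^ 'n) set \<Rightarrow> ('a ^ 'n) set" where
  "dual_code C = {u. \<forall>v\<in>C. std_inner u v = 0}"

definition cw_prod :: "'a::field ^ 'n \<Rightarrow> 'a ^ 'n \<Rightarrow> 'a ^ 'n" where
  "cw_prod x y = (\<chi> i. x $ i * y $ i)"

definition stab :: "('a::field ^ 'n) set \<Rightarrow> ('a ^ 'n) set" where
  "stab H = {x. \<forall>h\<in>H. cw_prod x h \<in> H}"

definition degenerated :: "('a::field ^ 'n) set \<Rightarrow> bool" where
  "degenerated H \<longleftrightarrow> vec.dim (stab H) > 1"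

end

theory Submission
  imports Defs
begin

text \<open>The componentwise product is self-adjoint for the standard form:
  \<open>\<langle>x * h, v\<rangle> = \<langle>h, x * v\<rangle>\<close>. Hence every stabiliser of \<open>C\<close> also stabilises \<open>C\<^sup>\<perp>\<close>,
  and applying this to \<open>C\<^sup>\<perp>\<close> together with \<open>C\<^sup>\<perp>\<^sup>\<perp> = C\<close> shows that \<open>C\<close> and \<open>C\<^sup>\<perp>\<close>
  have the same stabiliser, so one is degenerated iff the other is.\<close>

lemma std_inner_commute: "std_inner u v = std_inner v u"
  unfolding std_inner_def by (simp add: mult.commute)

lemma std_inner_cw_prod: "std_inner (cw_prod x h) v = std_inner h (cw_prod x v)"
  unfolding std_inner_def cw_prod_def by (simp add: mult_ac)

lemma std_inner_matrix_row: "std_inner (A $ k) v = (A *v v) $ k"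
  unfolding std_inner_def matrix_vector_mult_def by simp

lemma stab_subset_stab_dual_code: "stab C \<subseteq> stab (dual_code C)"
  unfolding stab_def dual_code_def by (auto simp: std_inner_cw_prod)

lemma subset_dual_code_dual_code: "C \<subseteq> dual_code (dual_code C)"
  unfolding dual_code_def by (auto simp: std_inner_commute)

lemma dual_code_separates:
  fixes C :: "('a::field ^ 'n) set"
  assumes "vec.subspace C" and "w \<notin> C"
  obtains u where "u \<in> dual_code C" and "std_inner u w \<noteq> 0"
proof -
  txt \<open>A linear map killing a basis of \<open>C\<close> but not \<open>w\<close> is represented, in any
    coordinate \<open>k\<close>, by a row of its matrix; that row is the separating vector.\<close>
  fix k :: 'n
  obtain B where B: "B \<subseteq> C" "vec.independent B" "C \<subseteq> vec.span B"
    by (rule vec.maximal_independent_subset)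
  have "w \<notin> vec.span B"
    using vec.span_minimal[OF B(1) assms(1)] assms(2) by blast
  then have "vec.independent (insert w B)"
    using B(2) by (rule vec.independent_insertI)
  then obtain g where g: "Vector_Spaces.linear (*s) (*s) g"
    and g_basis: "\<forall>x\<in>insert w B. g x = (if x = w then axis k 1 else 0)"
    using vec.linear_independent_extend[where f = "\<lambda>x. if x = w then axis k 1 else 0"] by blast
  have row: "std_inner (matrix g $ k) v = g v $ k" for v
    by (simp add: std_inner_matrix_row matrix_works[OF g])
  have "g v = 0" if "v \<in> C" for v
  proof (rule vec.linear_eq_0_on_span[OF g])
    show "v \<in> vec.span B" using that B(3) by blast
    show "g x = 0" if "x \<in> B" for x using g_basis B(1) assms(2) that by auto
  qed
  then have "matrix g $ k \<in> dual_code C"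
    unfolding dual_code_def by (simp add: row)
  moreover have "std_inner (matrix g $ k) w \<noteq> 0"
    using g_basis by (simp add: row)
  ultimately show thesis by (rule that)
qed

lemma dual_code_dual_code:
  fixes C :: "('a::field ^ 'n) set"
  assumes "vec.subspace C"
  shows "dual_code (dual_code C) = C"
proof
  show "dual_code (dual_code C) \<subseteq> C"
  proof
    fix w assume w: "w \<in> dual_code (dual_code C)"
    show "w \<in> C"
    proof (rule ccontr)
      assume "w \<notin> C"
      with assms obtain u where "u \<in> dual_code C" "std_inner u w \<noteq> 0"
        by (rule dual_code_separates)
      with w show False
        unfolding dual_code_def by (auto simp: std_inner_commute)
    qed
  qed
qed (rule subset_dual_code_dual_code)

lemma stab_dual_code:
  fixes C :: "('a::field ^ 'n) set"
  assumes "vec.subspace C"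
  shows "stab (dual_code C) = stab C"
proof
  show "stab (dual_code C) \<subseteq> stab C"
    using stab_subset_stab_dual_code[of "dual_code C"]
    unfolding dual_code_dual_code[OF assms] .
qed (rule stab_subset_stab_dual_code)

theorem lemma6p6:
  fixes C :: "('a::{field,finite} ^ 'n) set"
  assumes "is_code C"
  shows "degenerated C \<longleftrightarrow> degenerated (dual_code C)"
  using assms unfolding is_code_def degenerated_def by (simp add: stab_dual_code)

end
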